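(* Let $M>0$, $L,N\in\mathbb N$, $B\ge1$, $F\ge1$, $S>0$, let $\mathcal G=\mathcal F^{(M)}_{2d+1}(L,N,B,F,S)$ and $\boldsymbol G=\{\Psi_\psi:\psi\in\mathcal G\}$. Then (i) $\Psi(x)=0$ for every $\Psi\in\boldsymbol G$ and every $x\in\mathcal H$ with $\|x\|_\infty>M$; and (ii) $(\boldsymbol G,\|\cdot\|_\infty)$ is compact.
   Context: $D=[0,1]^d$, $\mathcal H=L^2(D)$; $\|x\|_\infty$ is the (essential) sup of $|x|$ on $D$; for $\Psi:\mathcal H\to\mathcal H$, $\|\Psi\|_\infty=\sup_{x}\|\Psi(x)\|_{\mathcal H}$; for a function $f$, $\|f\|_\infty$ is its sup norm. A ReLU network with architecture $(L,\mathbf p)$, $\mathbf p=(p_0,\dots,p_{L+1})$, is $f=A_{L+1}\circ\sigma\circ A_L\circ\cdots\circ\sigma\circ A_1$ with affine maps $A_l(x)=W_lx+b_l$, $A_l:\mathbb R^{p_{l-1}}\to\mathbb R^{p_l}$, and $\sigma(z)=\max\{z,0\}$ applied componentwise; $\theta(f)$ is the vector of all entries of all $W_l,b_l$; depth $L$, width $\max_{1\le l\le L}p_l$. $\mathcal F^{(M)}_{2d+1}(L,N,B,F,S)$ is the set of functions $f\mathbf 1_{D\times D\times[-M,M]}$ with $f:\mathbb R^{2d+1}\to\mathbb R$ a ReLU network of depth $\le L$, width $\le N$, $|\theta(f)|_\infty\le B$, number of nonzero parameters $|\theta(f)|_0\le S$, and $\|f\mathbf 1_{D\times D\times[-M,M]}\|_\infty\le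 F$. For $\psi:D\times D\times[-M,M]\to\mathbb R$, $\Psi_\psi(x)(u)=\int_D\psi(u,v,x(v))\,dv$ if $\|x\|_\infty\le M$ and $\Psi_\psi(x)=0$ if $\|x\|_\infty>M$. *)

theory Defs
  imports "HOL-Analysis.Analysis" "HOL-Probability.Essential_Supremum"
begin

definition cubeD :: "(real^'d::finite) set" where
  "cubeD = {u. \<forall>i. 0 \<le> u$i \<and> u$i \<le> 1}"

text \<open>Elements of H = L^2(D) are represented by Lebesgue-measurable square-integrable
  functions on D (representatives of the equivalence classes).\<close>
definition Hsp :: "((real^'d::finite) \<Rightarrow> real) set" where
  "Hsp = {x. x \<in> borel_measurable (lebesgue_on cubeD) \<and>
             integrable (lebesgue_on cubeD) (\<lambda>v. (x v)^2)}"

definition Hnorm :: "((real^'d::finite) \<Rightarrow> real) \<Rightarrow> real" where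
  "Hnorm y = sqrt (integral\<^sup>L (lebesgue_on cubeD) (\<lambda>v. (y v)^2))"

definition esssup_norm :: "((real^'d::finite) \<Rightarrow> real) \<Rightarrow> ereal" where
  "esssup_norm x = esssup (lebesgue_on cubeD) (\<lambda>v. ereal \<bar>x v\<bar>)"

text \<open>A layer is a pair (W, b); with input dimension m and output dimension n only the
  entries W i j (i<n, j<m) and b i (i<n) are used.\<close>
type_synonym layer = "(nat \<Rightarrow> nat \<Rightarrow> real) \<times> (nat \<Rightarrow> real)"

definition affine :: "nat \<Rightarrow> nat \<Rightarrow> layer \<Rightarrow> (nat \<Rightarrow> real) \<Rightarrow> (nat \<Rightarrow> real)" where
  "affine m n l x = (\<lambda>i. if i < n then (\<Sum>j<m. fst l i j * x j) + snd l i else 0)"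

definition relu :: "(nat \<Rightarrow> real) \<Rightarrow> (nat \<Rightarrow> real)" where
  "relu x = (\<lambda>i. max (x i) 0)"

text \<open>net_eval p ls = A_{L+1} o sigma o A_L o ... o sigma o A_1, for dimension list
  p = [p_0,...,p_{L+1}] and layer list ls = [A_1,...,A_{L+1}].\<close>
fun net_eval :: "nat list \<Rightarrow> layer list \<Rightarrow> (nat \<Rightarrow> real) \<Rightarrow> (nat \<Rightarrow> real)" where
  "net_eval (m # n # ps) (l # ls) x =
     (if ls = [] then affine m n l x else net_eval (n # ps) ls (relu (affine m n l x)))"
| "net_eval _ _ x = x"

definition net_wf :: "nat list \<Rightarrow> layer list \<Rightarrow> bool" where
  "net_wf p ls \<longleftrightarrow> ls \<noteq> [] \<and> length p = length ls + 1"

definition net_depth :: "layer list \<Rightarrow> nat" where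
  "net_depth ls = length ls - 1"

definition net_width_le :: "nat list \<Rightarrow> layer list \<Rightarrow> nat \<Rightarrow> bool" where
  "net_width_le p ls N \<longleftrightarrow> (\<forall>k\<in>{1..<length ls}. p ! k \<le> N)"

definition net_param_bound :: "nat list \<Rightarrow> layer list \<Rightarrow> real \<Rightarrow> bool" where
  "net_param_bound p ls B \<longleftrightarrow>
     (\<forall>l<length ls. (\<forall>i<p!(l+1). \<forall>j<p!l. \<bar>fst (ls!l) i j\<bar> \<le> B) \<and>
                    (\<forall>i<p!(l+1). \<bar>snd (ls!l) i\<bar> \<le> B))"

definition net_nnz :: "nat list \<Rightarrow> layer list \<Rightarrow> nat" where
  "net_nnz p ls =
     card {(l,i,j). l < length ls \<and> i < p!(l+1) \<and> j < p!l \<and> fst (ls!l) i j \<noteq> 0}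
   + card {(l,i). l < length ls \<and> i < p!(l+1) \<and> snd (ls!l) i \<noteq> 0}"

text \<open>A fixed enumeration of the coordinates of R^d, used to identify
  R^d x R^d x R with R^(2d+1).\<close>
definition coord_idx :: "'d::finite \<Rightarrow> nat" where
  "coord_idx = (SOME e. bij_betw e (UNIV::'d set) {..<CARD('d)})"

definition input_vec :: "real^'d::finite \<Rightarrow> real^'d \<Rightarrow> real \<Rightarrow> (nat \<Rightarrow> real)" where
  "input_vec u v t = (\<lambda>k. if k < CARD('d) then u $ (inv_into UNIV coord_idx k)
        else if k < 2 * CARD('d) then v $ (inv_into UNIV coord_idx (k - CARD('d)))
        else if k = 2 * CARD('d) then t else 0)"

definition net_fun :: "nat list \<Rightarrow> layer list \<Rightarrow> real^'d::finite \<Rightarrow> real^'d \<Rightarrow> real \<Rightarrow> real" where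
  "net_fun p ls u v t = net_eval p ls (input_vec u v t) 0"

definition in_dom :: "real \<Rightarrow> real^'d::finite \<Rightarrow> real^'d \<Rightarrow> real \<Rightarrow> bool" where
  "in_dom M u v t \<longleftrightarrow> u \<in> cubeD \<and> v \<in> cubeD \<and> \<bar>t\<bar> \<le> M"

definition NetClass :: "real \<Rightarrow> nat \<Rightarrow> nat \<Rightarrow> real \<Rightarrow> real \<Rightarrow> real \<Rightarrow>
    (real^'d::finite \<Rightarrow> real^'d \<Rightarrow> real \<Rightarrow> real) set" where
  "NetClass M L N B F S =
     {\<psi> :: real^'d \<Rightarrow> real^'d \<Rightarrow> real \<Rightarrow> real. \<exists>p ls. net_wf p ls \<and> p ! 0 = 2 * CARD('d) + 1 \<and> p ! length ls = 1 \<and>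
             net_depth ls \<le> L \<and> net_width_le p ls N \<and> net_param_bound p ls B \<and>
             real (net_nnz p ls) \<le> S \<and>
             (\<forall>u v t. \<bar>if in_dom M u v t then net_fun p ls (u::real^'d) v t else 0\<bar> \<le> F) \<and>
             \<psi> = (\<lambda>u v t. if in_dom M u v t then net_fun p ls u v t else 0)}"

definition Psi_op :: "real \<Rightarrow> (real^'d::finite \<Rightarrow> real^'d \<Rightarrow> real \<Rightarrow> real) \<Rightarrow>
    (real^'d \<Rightarrow> real) \<Rightarrow> (real^'d \<Rightarrow> real)" where
  "Psi_op M \<psi> x = (if esssup_norm x \<le> ereal M
       then (\<lambda>u. integral\<^sup>L (lebesgue_on cubeD) (\<lambda>v. \<psi> u v (x v)))
       else (\<lambda>u. 0))"

definition op_dist :: "((real^'d::finite \<Rightarrow> real) \<Rightarrow> (real^'d \<Rightarrow> real)) \<Rightarrow>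
    ((real^'d \<Rightarrow> real) \<Rightarrow> (real^'d \<Rightarrow> real)) \<Rightarrow> ereal" where
  "op_dist \<Psi> \<Phi> = (SUP x\<in>Hsp. ereal (Hnorm (\<lambda>u. \<Psi> x u - \<Phi> x u)))"

definition dopen_in :: "'a set \<Rightarrow> ('a \<Rightarrow> 'a \<Rightarrow> ereal) \<Rightarrow> 'a set \<Rightarrow> bool" where
  "dopen_in K d U \<longleftrightarrow> U \<subseteq> K \<and> (\<forall>a\<in>U. \<exists>e>0. \<forall>b\<in>K. d b a < ereal e \<longrightarrow> b \<in> U)"

definition dcompact :: "'a set \<Rightarrow> ('a \<Rightarrow> 'a \<Rightarrow> ereal) \<Rightarrow> bool" where
  "dcompact K d \<longleftrightarrow> (\<forall>\<U>. (\<forall>U\<in>\<U>. dopen_in K d U) \<and> K \<subseteq> \<Union>\<U> \<longrightarrow>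
       (\<exists>\<V>\<subseteq>\<U>. finite \<V> \<and> K \<subseteq> \<Union>\<V>))"

end

theory Submission
  imports Defs "HOL-Probability.Probability_Measure"
begin

text \<open>A network of a given architecture is determined by finitely many parameters, and on
  the bounded domain D x D x [-M, M] its output depends Lipschitz-continuously on them,
  uniformly in the input. For each of the finitely many admissible architectures the admissible
  parameters therefore form a closed subset of the box [-B, B]^I: the bound on the number of
  nonzero parameters is preserved under limits because nonzero entries stay nonzero nearby, and
  the sup-norm bound F because of the Lipschitz dependence. So they form a compact set. As D has
  measure one, Psi_psi moves by at most sup |psi - psi'| in the operator distance, hence each
  architecture contributes a continuous image of a compact set, and G is a finite union of
  these.\<close>

section \<open>Compactness with respect to a distance\<close>

lemma finite_subcover_image:
  assumes C: "compactin X C" and fCK: "f ` C \<subseteq> K"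
    and cont: "\<And>a e. a \<in> C \<Longrightarrow> e > 0 \<Longrightarrow>
      \<exists>V. openin X V \<and> a \<in> V \<and> (\<forall>b\<in>C \<inter> V. d (f b) (f a) < ereal e)"
    and open_cover: "\<forall>U\<in>\<U>. dopen_in K d U" and covers: "K \<subseteq> \<Union>\<U>"
  shows "\<exists>\<V>\<subseteq>\<U>. finite \<V> \<and> f ` C \<subseteq> \<Union>\<V>"
proof -
  have "\<exists>U e V. U \<in> \<U> \<and> (\<forall>b\<in>K. d b (f a) < ereal e \<longrightarrow> b \<in> U) \<and>
      openin X V \<and> a \<in> V \<and> (\<forall>b\<in>C \<inter> V. d (f b) (f a) < ereal e)" if a: "a \<in> C" for a
  proof -
    obtain U where U: "U \<in> \<U>" "f a \<in> U" using a fCK covers by blast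
    then obtain e where e: "e > 0" "\<forall>b\<in>K. d b (f a) < ereal e \<longrightarrow> b \<in> U"
      using open_cover unfolding dopen_in_def by blast
    then show ?thesis using U cont[OF a e(1)] by blast
  qed
  then obtain U e V where UeV: "\<And>a. a \<in> C \<Longrightarrow> U a \<in> \<U> \<and>
      (\<forall>b\<in>K. d b (f a) < ereal (e a) \<longrightarrow> b \<in> U a) \<and>
      openin X (V a) \<and> a \<in> V a \<and> (\<forall>b\<in>C \<inter> V a. d (f b) (f a) < ereal (e a))"
    by metis
  obtain \<W> where "finite \<W>" "\<W> \<subseteq> V ` C" "C \<subseteq> \<Union>\<W>"
    using compactinD[OF C, of "V ` C"] UeV by blast
  then obtain A where A: "A \<subseteq> C" "finite A" "C \<subseteq> (\<Union>a\<in>A. V a)"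
    by (metis finite_subset_image)
  have "f ` C \<subseteq> (\<Union>a\<in>A. U a)"
  proof
    fix y assume "y \<in> f ` C"
    then obtain a b where "b \<in> C" "y = f b" "a \<in> A" "b \<in> V a" using A by blast
    then show "y \<in> (\<Union>a\<in>A. U a)" using UeV[of a] A fCK by blast
  qed
  then show ?thesis using A UeV by (intro exI[of _ "U ` A"]) auto
qed

lemma dcompact_finite_UN:
  assumes "finite P" and K: "K = (\<Union>p\<in>P. A p)"
    and subcover: "\<And>p \<U>. p \<in> P \<Longrightarrow> \<forall>U\<in>\<U>. dopen_in K d U \<Longrightarrow> K \<subseteq> \<Union>\<U> \<Longrightarrow>
      \<exists>\<V>\<subseteq>\<U>. finite \<V> \<and> A p \<subseteq> \<Union>\<V>"
  shows "dcompact K d"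
  unfolding dcompact_def
proof (intro allI impI)
  fix \<U> assume "(\<forall>U\<in>\<U>. dopen_in K d U) \<and> K \<subseteq> \<Union>\<U>"
  then have "\<forall>p\<in>P. \<exists>\<V>. \<V> \<subseteq> \<U> \<and> finite \<V> \<and> A p \<subseteq> \<Union>\<V>"
    using subcover by blast
  then obtain \<V> where \<V>: "\<And>p. p \<in> P \<Longrightarrow> \<V> p \<subseteq> \<U> \<and> finite (\<V> p) \<and> A p \<subseteq> \<Union>(\<V> p)"
    by metis
  show "\<exists>\<V>\<subseteq>\<U>. finite \<V> \<and> K \<subseteq> \<Union>\<V>"
  proof (intro exI conjI)
    show "\<Union>(\<V> ` P) \<subseteq> \<U>" "finite (\<Union>(\<V> ` P))" using \<V> \<open>finite P\<close> by auto
    show "K \<subseteq> \<Union>(\<Union>(\<V> ` P))" unfolding K using \<V> by fastforce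
  qed
qed

section \<open>Perturbation of ReLU networks\<close>

definition net_params_close :: "nat list \<Rightarrow> layer list \<Rightarrow> layer list \<Rightarrow> real \<Rightarrow> bool" where
  "net_params_close p ls ls' \<delta> \<longleftrightarrow>
     (\<forall>l<length ls. (\<forall>i<p!(l+1). \<forall>j<p!l. \<bar>fst (ls!l) i j - fst (ls'!l) i j\<bar> \<le> \<delta>) \<and>
                    (\<forall>i<p!(l+1). \<bar>snd (ls!l) i - snd (ls'!l) i\<bar> \<le> \<delta>))"

lemma net_param_bound_Cons:
  "net_param_bound (m # k # ps) (l # ls) B \<longleftrightarrow>
     (\<forall>i<k. \<forall>j<m. \<bar>fst l i j\<bar> \<le> B) \<and> (\<forall>i<k. \<bar>snd l i\<bar> \<le> B) \<and> net_param_bound (k # ps) ls B"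
  unfolding net_param_bound_def by (auto simp: All_less_Suc2)

lemma net_params_close_Cons:
  "net_params_close (m # k # ps) (l # ls) (l' # ls') \<delta> \<longleftrightarrow>
     (\<forall>i<k. \<forall>j<m. \<bar>fst l i j - fst l' i j\<bar> \<le> \<delta>) \<and> (\<forall>i<k. \<bar>snd l i - snd l' i\<bar> \<le> \<delta>) \<and>
     net_params_close (k # ps) ls ls' \<delta>"
  unfolding net_params_close_def by (auto simp: All_less_Suc2)

lemma abs_affine_diff_le:
  assumes W: "\<forall>i<n. \<forall>j<m. \<bar>fst l i j\<bar> \<le> B"
    and dW: "\<forall>i<n. \<forall>j<m. \<bar>fst l i j - fst l' i j\<bar> \<le> \<delta>"
    and db: "\<forall>i<n. \<bar>snd l i - snd l' i\<bar> \<le> \<delta>"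
    and dz: "\<forall>j<m. \<bar>z j - z' j\<bar> \<le> \<eta>" and z': "\<forall>j<m. \<bar>z' j\<bar> \<le> R"
    and nonneg: "0 \<le> B" "0 \<le> R" "0 \<le> \<delta>" "0 \<le> \<eta>"
  shows "\<bar>affine m n l z i - affine m n l' z' i\<bar> \<le> (m * B + m * R + 1) * (\<delta> + \<eta>)"
proof (cases "i < n")
  case False
  then show ?thesis using nonneg by (simp add: affine_def)
next
  case True
  have term_le: "\<bar>fst l i j * z j - fst l' i j * z' j\<bar> \<le> B * \<eta> + \<delta> * R" if "j < m" for j
  proof -
    have "fst l i j * z j - fst l' i j * z' j
        = fst l i j * (z j - z' j) + (fst l i j - fst l' i j) * z' j"
      by (simp add: algebra_simps)
    also have "\<bar>\<dots>\<bar> \<le> \<bar>fst l i j\<bar> * \<bar>z j - z' j\<bar> + \<bar>fst l i j - fst l' i j\<bar> * \<bar>z' j\<bar>"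
      by (metis abs_mult abs_triangle_ineq)
    also have "\<dots> \<le> B * \<eta> + \<delta> * R"
      using W dW dz z' True that nonneg by (intro add_mono mult_mono) auto
    finally show ?thesis .
  qed
  have "\<bar>affine m n l z i - affine m n l' z' i\<bar>
      = \<bar>(\<Sum>j<m. fst l i j * z j - fst l' i j * z' j) + (snd l i - snd l' i)\<bar>"
    using True by (simp add: affine_def sum_subtractf)
  also have "\<dots> \<le> (\<Sum>j<m. \<bar>fst l i j * z j - fst l' i j * z' j\<bar>) + \<bar>snd l i - snd l' i\<bar>"
    by (rule order_trans[OF abs_triangle_ineq add_mono[OF sum_abs order_refl]])
  also have "\<dots> \<le> m * (B * \<eta> + \<delta> * R) + \<delta>"
    using sum_mono[of "{..<m}", OF term_le] db True by (intro add_mono) auto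
  also have "\<dots> \<le> (m * B + m * R + 1) * (\<delta> + \<eta>)"
    using nonneg by (simp add: algebra_simps)
  finally show ?thesis .
qed

lemma abs_affine_le:
  assumes "\<forall>i<n. \<forall>j<m. \<bar>fst l i j\<bar> \<le> B" and "\<forall>i<n. \<bar>snd l i\<bar> \<le> B"
    and "\<forall>j<m. \<bar>z j\<bar> \<le> R" and "0 \<le> B" "0 \<le> R"
  shows "\<bar>affine m n l z i\<bar> \<le> m * B * R + B"
proof (cases "i < n")
  case True
  have "\<bar>affine m n l z i\<bar> \<le> (\<Sum>j<m. \<bar>fst l i j * z j\<bar>) + \<bar>snd l i\<bar>"
    using True
    by (simp add: affine_def order_trans[OF abs_triangle_ineq add_mono[OF sum_abs order_refl]])
  also have "\<dots> \<le> (\<Sum>j<m. B * R) + B"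
    using assms True by (intro add_mono sum_mono) (auto simp: abs_mult mult_mono)
  finally show ?thesis by simp
qed (use assms in \<open>simp add: affine_def\<close>)

lemma abs_relu_le: "\<bar>relu x i\<bar> \<le> \<bar>x i\<bar>"
  by (simp add: relu_def)

lemma abs_relu_diff_le: "\<bar>relu x i - relu y i\<bar> \<le> \<bar>x i - y i\<bar>"
  by (simp add: relu_def)

text \<open>m B + m R + 1 is the perturbation constant of a single layer with m inputs bounded by R
  (lemma abs_affine_diff_le); its outputs are bounded by m B R + B, the input bound of the next
  layer.\<close>
fun net_perturb_const :: "real \<Rightarrow> real \<Rightarrow> nat list \<Rightarrow> real" where
  "net_perturb_const B R (m # k # ps) =
     (if ps = [] then m * B + m * R + 1
      else net_perturb_const B (m * B * R + B) (k # ps) * (m * B + m * R + 2))"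
| "net_perturb_const B R _ = 0"

lemma net_perturb_const_nonneg: "0 \<le> B \<Longrightarrow> 0 \<le> R \<Longrightarrow> 0 \<le> net_perturb_const B R p"
  by (induction B R p rule: net_perturb_const.induct) auto

lemma net_eval_perturb:
  assumes "length q = length ls + 1" "ls \<noteq> []" "length ls' = length ls"
    and "net_param_bound q ls B" "net_param_bound q ls' B" "net_params_close q ls ls' \<delta>"
    and "\<forall>j<q!0. \<bar>z' j\<bar> \<le> R" "\<forall>j<q!0. \<bar>z j - z' j\<bar> \<le> \<eta>"
    and "0 \<le> B" "0 \<le> R" "0 \<le> \<delta>" "0 \<le> \<eta>"
  shows "\<bar>net_eval q ls z i - net_eval q ls' z' i\<bar> \<le> net_perturb_const B R q * (\<delta> + \<eta>)"
  using assms
proof (induction ls arbitrary: q ls' z z' R \<eta> i)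
  case Nil
  then show ?case by simp
next
  case (Cons l ls)
  obtain m k ps where q: "q = m # k # ps" "length ps = length ls"
    using Cons.prems(1) by (cases q; cases "tl q") auto
  obtain l' ls'' where ls': "ls' = l' # ls''" "length ls'' = length ls"
    using Cons.prems(3) by (cases ls') auto
  note bounds = Cons.prems(4-6)[unfolded q ls' net_param_bound_Cons net_params_close_Cons]
  define K1 where "K1 = m * B + m * R + 1"
  have K1: "0 \<le> K1" using Cons.prems by (simp add: K1_def)
  have layer: "\<bar>affine m k l z j - affine m k l' z' j\<bar> \<le> K1 * (\<delta> + \<eta>)" for j
    unfolding K1_def using bounds Cons.prems q by (intro abs_affine_diff_le) auto
  show ?case
  proof (cases "ls = []")
    case True
    then show ?thesis using layer q ls' by (simp add: K1_def)
  next
    case False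
    then have "ps \<noteq> []" using q by auto
    define y where "y = relu (affine m k l z)"
    define y' where "y' = relu (affine m k l' z')"
    have "\<bar>y' j\<bar> \<le> m * B * R + B" for j
      unfolding y'_def using bounds Cons.prems q
      by (intro order_trans[OF abs_relu_le abs_affine_le]) auto
    moreover have "\<bar>y j - y' j\<bar> \<le> K1 * (\<delta> + \<eta>)" for j
      unfolding y_def y'_def using layer by (rule order_trans[OF abs_relu_diff_le])
    ultimately have "\<bar>net_eval (k # ps) ls y i - net_eval (k # ps) ls'' y' i\<bar>
        \<le> net_perturb_const B (m * B * R + B) (k # ps) * (\<delta> + K1 * (\<delta> + \<eta>))"
      using bounds Cons.prems q ls' False K1
      by (intro Cons.IH) (auto intro: mult_nonneg_nonneg)
    also have "\<dots> \<le> net_perturb_const B (m * B * R + B) (k # ps) * ((K1 + 1) * (\<delta> + \<eta>))"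
      using Cons.prems by (intro mult_left_mono net_perturb_const_nonneg) (auto simp: algebra_simps)
    finally have "\<bar>net_eval (k # ps) ls y i - net_eval (k # ps) ls'' y' i\<bar>
        \<le> net_perturb_const B R q * (\<delta> + \<eta>)"
      using q \<open>ps \<noteq> []\<close> by (simp add: K1_def algebra_simps)
    moreover have "ls'' \<noteq> []" using False ls' by auto
    ultimately show ?thesis using q ls' False by (simp add: y_def y'_def)
  qed
qed

lemma abs_input_vec_le:
  assumes "in_dom M u v t"
  shows "\<bar>input_vec u v t j\<bar> \<le> 1 + M"
proof -
  have "0 \<le> u $ i \<and> u $ i \<le> 1" "0 \<le> v $ i \<and> v $ i \<le> 1" "\<bar>t\<bar> \<le> M" for i
    using assms by (auto simp: in_dom_def cubeD_def)
  then show ?thesis unfolding input_vec_def by (smt (verit))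
qed

lemma net_fun_perturb:
  assumes "net_wf p ls" "length ls' = length ls"
    and "net_param_bound p ls B" "net_param_bound p ls' B" "net_params_close p ls ls' \<delta>"
    and "0 \<le> B" "0 \<le> \<delta>" and dom: "in_dom M u v t"
  shows "\<bar>net_fun p ls u v t - net_fun p ls' u v t\<bar> \<le> net_perturb_const B (1 + M) p * \<delta>"
proof -
  have "0 \<le> M" using dom by (auto simp: in_dom_def)
  then show ?thesis
    using assms abs_input_vec_le[OF dom]
      net_eval_perturb[of p ls ls' B \<delta> "input_vec u v t" "1 + M" "input_vec u v t" 0]
    by (simp add: net_fun_def net_wf_def)
qed

section \<open>Parameter vectors\<close>

text \<open>The parameters of a network with architecture p are indexed by triples (l, i, j):
  the weight W_l i j for j < p_l and the bias b_l i for j = p_l.\<close>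
definition param_index :: "nat list \<Rightarrow> (nat \<times> nat \<times> nat) set" where
  "param_index p = (SIGMA l:{..<length p - 1}. SIGMA i:{..<p!(l+1)}. {..p!l})"

definition layers_of :: "nat list \<Rightarrow> (nat \<times> nat \<times> nat \<Rightarrow> real) \<Rightarrow> layer list" where
  "layers_of p \<theta> = map (\<lambda>l. (\<lambda>i j. \<theta> (l, i, j), \<lambda>i. \<theta> (l, i, p!l))) [0..<length p - 1]"

definition params_of :: "nat list \<Rightarrow> layer list \<Rightarrow> (nat \<times> nat \<times> nat \<Rightarrow> real)" where
  "params_of p ls =
     restrict (\<lambda>(l, i, j). if j < p!l then fst (ls!l) i j else snd (ls!l) i) (param_index p)"

lemma finite_param_index: "finite (param_index p)"
  unfolding param_index_def by (intro finite_SigmaI) auto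

lemma mem_param_index: "(l, i, j) \<in> param_index p \<longleftrightarrow> l < length p - 1 \<and> i < p!(l+1) \<and> j \<le> p!l"
  by (auto simp: param_index_def)

lemma length_layers_of [simp]: "length (layers_of p \<theta>) = length p - 1"
  by (simp add: layers_of_def)

lemma nth_layers_of: "l < length p - 1 \<Longrightarrow> layers_of p \<theta> ! l = (\<lambda>i j. \<theta> (l, i, j), \<lambda>i. \<theta> (l, i, p!l))"
  by (simp add: layers_of_def)

lemma net_wf_layers_of: "2 \<le> length p \<Longrightarrow> net_wf p (layers_of p \<theta>)"
  by (auto simp: net_wf_def layers_of_def)

lemma net_param_bound_layers_of:
  "\<forall>k\<in>param_index p. \<bar>\<theta> k\<bar> \<le> B \<Longrightarrow> net_param_bound p (layers_of p \<theta>) B"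
  unfolding net_param_bound_def by (auto simp: nth_layers_of mem_param_index)

lemma net_params_close_layers_of:
  "\<forall>k\<in>param_index p. \<bar>\<theta> k - \<theta>' k\<bar> \<le> \<delta> \<Longrightarrow> net_params_close p (layers_of p \<theta>) (layers_of p \<theta>') \<delta>"
  unfolding net_params_close_def by (auto simp: nth_layers_of mem_param_index)

lemma net_nnz_layers_of_mono:
  assumes "\<forall>k\<in>param_index p. \<theta> k \<noteq> 0 \<longrightarrow> \<theta>' k \<noteq> 0"
  shows "net_nnz p (layers_of p \<theta>) \<le> net_nnz p (layers_of p \<theta>')"
proof -
  have "finite {(l, i, j).
      l < length p - 1 \<and> i < p!(l+1) \<and> j < p!l \<and> fst (layers_of p \<theta>' ! l) i j \<noteq> 0}"
    by (rule finite_subset[OF _ finite_param_index[of p]]) (auto simp: mem_param_index)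
  moreover have "finite {(l, i). l < length p - 1 \<and> i < p!(l+1) \<and> snd (layers_of p \<theta>' ! l) i \<noteq> 0}"
    by (rule finite_subset[of _ "SIGMA l:{..<length p - 1}. {..<p!(l+1)}"]) auto
  ultimately show ?thesis
    using assms unfolding net_nnz_def
    by (intro add_mono card_mono) (auto simp: nth_layers_of mem_param_index)
qed

lemma layers_of_params_of:
  assumes "l < length p - 1" "i < p!(l+1)"
  shows "j < p!l \<Longrightarrow> fst (layers_of p (params_of p ls) ! l) i j = fst (ls!l) i j"
    and "snd (layers_of p (params_of p ls) ! l) i = snd (ls!l) i"
  using assms by (auto simp: nth_layers_of params_of_def mem_param_index)

lemma net_nnz_layers_of_params_of:
  "length ls = length p - 1 \<Longrightarrow> net_nnz p (layers_of p (params_of p ls)) = net_nnz p ls"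
  unfolding net_nnz_def
  by (auto simp: layers_of_params_of intro!: arg_cong2[where f="(+)"] arg_cong[where f=card])

type_synonym 'd kernel = "real^'d \<Rightarrow> real^'d \<Rightarrow> real \<Rightarrow> real"

definition net_psi :: "real \<Rightarrow> nat list \<Rightarrow> (nat \<times> nat \<times> nat \<Rightarrow> real) \<Rightarrow> 'd::finite kernel" where
  "net_psi M p \<theta> = (\<lambda>u v t. if in_dom M u v t then net_fun p (layers_of p \<theta>) u v t else 0)"

lemma net_psi_lipschitz:
  assumes "2 \<le> length p" "0 \<le> M" "0 \<le> B" "0 \<le> \<delta>"
    and "\<forall>k\<in>param_index p. \<bar>\<theta> k\<bar> \<le> B" "\<forall>k\<in>param_index p. \<bar>\<theta>' k\<bar> \<le> B"
    and "\<forall>k\<in>param_index p. \<bar>\<theta> k - \<theta>' k\<bar> \<le> \<delta>"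
  shows "\<bar>net_psi M p \<theta> u v t - net_psi M p \<theta>' u v t\<bar> \<le> net_perturb_const B (1 + M) p * \<delta>"
  using assms net_perturb_const_nonneg[of B "1 + M" p]
  by (auto simp: net_psi_def intro!: net_fun_perturb net_wf_layers_of net_param_bound_layers_of
      net_params_close_layers_of)

section \<open>The integral operators on the unit cube\<close>

lemma cubeD_eq_cbox: "(cubeD :: (real^'d::finite) set) = cbox 0 1"
  by (auto simp: cubeD_def mem_box_cart)

lemma prob_space_cubeD: "prob_space (lebesgue_on (cubeD :: (real^'d::finite) set))"
proof (rule prob_spaceI)
  have "emeasure lebesgue (cbox 0 (1::real^'d)) = 1"
    by (auto simp: emeasure_lborel_cbox_eq Basis_vec_def inner_axis intro!: prod.neutral)
  then show "emeasure (lebesgue_on cubeD) (space (lebesgue_on (cubeD :: (real^'d) set))) = 1"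
    by (simp add: cubeD_eq_cbox emeasure_restrict_space)
qed

lemma integral_cubeD_le_const:
  fixes f :: "real^'d::finite \<Rightarrow> real"
  assumes "\<And>v. f v \<le> c" and "0 \<le> c"
  shows "integral\<^sup>L (lebesgue_on cubeD) f \<le> c"
proof -
  interpret prob_space "lebesgue_on (cubeD :: (real^'d) set)" by (rule prob_space_cubeD)
  show ?thesis
    using assms by (cases "integrable (lebesgue_on cubeD) f")
      (auto intro: integral_le_const simp: not_integrable_integral_eq)
qed

lemma op_dist_Psi_op_le:
  fixes \<psi> \<psi>' :: "'d::finite kernel"
  assumes "\<And>u x. x \<in> Hsp \<Longrightarrow> integrable (lebesgue_on cubeD) (\<lambda>v. \<psi> u v (x v))"
    and "\<And>u x. x \<in> Hsp \<Longrightarrow> integrable (lebesgue_on cubeD) (\<lambda>v. \<psi>' u v (x v))"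
    and close: "\<And>u v t. \<bar>\<psi> u v t - \<psi>' u v t\<bar> \<le> c"
  shows "op_dist (Psi_op M \<psi>) (Psi_op M \<psi>') \<le> ereal c"
  unfolding op_dist_def
proof (rule SUP_least)
  fix x :: "real^'d \<Rightarrow> real" assume x: "x \<in> Hsp"
  have c: "0 \<le> c" using close[of 0 0 0] by linarith
  have pointwise: "\<bar>Psi_op M \<psi> x u - Psi_op M \<psi>' x u\<bar> \<le> c" for u
  proof (cases "esssup_norm x \<le> ereal M")
    case True
    then have "\<bar>Psi_op M \<psi> x u - Psi_op M \<psi>' x u\<bar>
        = \<bar>integral\<^sup>L (lebesgue_on cubeD) (\<lambda>v. \<psi> u v (x v) - \<psi>' u v (x v))\<bar>"
      using assms(1,2)[OF x] by (simp add: Psi_op_def)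
    also have "\<dots> \<le> integral\<^sup>L (lebesgue_on cubeD) (\<lambda>v. \<bar>\<psi> u v (x v) - \<psi>' u v (x v)\<bar>)"
      by (rule integral_abs_bound)
    also have "\<dots> \<le> c"
      using close c by (rule integral_cubeD_le_const)
    finally show ?thesis .
  qed (simp add: Psi_op_def c)
  have "(Psi_op M \<psi> x u - Psi_op M \<psi>' x u)\<^sup>2 \<le> c\<^sup>2" for u
    using pointwise[of u] c by (metis abs_le_square_iff abs_of_nonneg)
  then have "integral\<^sup>L (lebesgue_on cubeD) (\<lambda>u. (Psi_op M \<psi> x u - Psi_op M \<psi>' x u)\<^sup>2) \<le> c\<^sup>2"
    by (rule integral_cubeD_le_const) simp
  then show "ereal (Hnorm (\<lambda>u. Psi_op M \<psi> x u - Psi_op M \<psi>' x u)) \<le> ereal c"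
    unfolding Hnorm_def using c real_sqrt_le_mono by fastforce
qed

lemma net_eval_Nil: "net_eval q [] x = x"
  by (cases "(q, [] :: layer list, x)" rule: net_eval.cases) auto

lemma borel_measurable_net_eval:
  assumes "\<And>j. (\<lambda>w. z w j) \<in> borel_measurable N"
  shows "(\<lambda>w. net_eval q ls (z w) i) \<in> borel_measurable N"
  using assms
proof (induction ls arbitrary: q z i)
  case Nil
  then show ?case by (simp add: net_eval_Nil)
next
  case (Cons l ls)
  have affine: "(\<lambda>w. affine m k l (z w) j) \<in> borel_measurable N" for m k j
    using Cons.prems by (simp add: affine_def)
  then have "(\<lambda>w. relu (affine m k l (z w)) j) \<in> borel_measurable N" for m k j
    by (simp add: relu_def)
  then have "(\<lambda>w. net_eval q' ls (relu (affine m k l (z w))) i) \<in> borel_measurable N" for q' m k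
    by (rule Cons.IH)
  then show ?case
    using affine Cons.prems by (cases q; cases "tl q"; cases "ls = []") auto
qed

lemma integrable_net_psi:
  fixes x :: "real^'d::finite \<Rightarrow> real"
  assumes x: "x \<in> borel_measurable (lebesgue_on cubeD)"
    and bounded: "\<forall>u v t. \<bar>net_psi M p \<theta> (u::real^'d) v t\<bar> \<le> F"
  shows "integrable (lebesgue_on cubeD) (\<lambda>v. net_psi M p \<theta> u v (x v))"
proof -
  interpret prob_space "lebesgue_on (cubeD :: (real^'d) set)" by (rule prob_space_cubeD)
  have "(\<lambda>v::real^'d. v $ i) \<in> borel_measurable (lebesgue_on cubeD)" for i
    by (intro continuous_imp_measurable_on_sets_lebesgue continuous_intros)
      (simp add: cubeD_eq_cbox)
  then have "(\<lambda>v. input_vec u v (x v) j) \<in> borel_measurable (lebesgue_on cubeD)" for j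
    using x by (simp add: input_vec_def)
  then have "(\<lambda>v. net_fun p (layers_of p \<theta>) u v (x v)) \<in> borel_measurable (lebesgue_on cubeD)"
    unfolding net_fun_def by (rule borel_measurable_net_eval)
  then have "(\<lambda>v. if u \<in> cubeD \<and> \<bar>x v\<bar> \<le> M then net_fun p (layers_of p \<theta>) u v (x v) else 0)
      \<in> borel_measurable (lebesgue_on cubeD)"
    using x by measurable
  then have "(\<lambda>v. net_psi M p \<theta> u v (x v)) \<in> borel_measurable (lebesgue_on cubeD)"
    by (rule measurable_cong[THEN iffD1, rotated]) (simp add: net_psi_def in_dom_def)
  then show ?thesis
    using bounded by (intro integrable_const_bound[where B=F]) simp_all
qed

section \<open>Compactness of the admissible parameters\<close>

abbreviation params_topology :: "'i set \<Rightarrow> ('i \<Rightarrow> real) topology" where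
  "params_topology I \<equiv> product_topology (\<lambda>_. euclideanreal) I"

lemma openin_params_topology_box:
  assumes "finite I"
  shows "openin (params_topology I) {\<theta> \<in> topspace (params_topology I). \<forall>k\<in>I. \<bar>\<theta> k - a k\<bar> < \<delta>}"
proof -
  have "{\<theta> \<in> topspace (params_topology I). \<forall>k\<in>I. \<bar>\<theta> k - a k\<bar> < \<delta>}
     = (\<Inter>k\<in>I. {\<theta> \<in> topspace (params_topology I). \<theta> k \<in> ball (a k) \<delta>})
       \<inter> topspace (params_topology I)"
    by (auto simp: dist_real_def abs_minus_commute)
  also have "openin (params_topology I) \<dots>"
  proof (rule openin_INT[OF assms])
    fix k assume "k \<in> I"
    show "openin (params_topology I) {\<theta> \<in> topspace (params_topology I). \<theta> k \<in> ball (a k) \<delta>}"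
      using continuous_map_product_projection[OF \<open>k \<in> I\<close>]
      by (rule openin_continuous_map_preimage) (simp flip: open_openin)
  qed
  finally show ?thesis .
qed

lemma closedin_params_topology_by_boxes:
  assumes "finite I"
    and rejected: "\<And>\<theta>\<^sub>0. \<theta>\<^sub>0 \<in> topspace (params_topology I) \<Longrightarrow> \<not> P \<theta>\<^sub>0 \<Longrightarrow>
      \<exists>\<delta>>0. \<forall>\<theta>\<in>topspace (params_topology I). (\<forall>k\<in>I. \<bar>\<theta> k - \<theta>\<^sub>0 k\<bar> < \<delta>) \<longrightarrow> \<not> P \<theta>"
  shows "closedin (params_topology I) {\<theta> \<in> topspace (params_topology I). P \<theta>}"
  unfolding closedin_def
proof (intro conjI)
  show "openin (params_topology I)
      (topspace (params_topology I) - {\<theta> \<in> topspace (params_topology I). P \<theta>})"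
  proof (subst openin_subopen, intro ballI)
    fix \<theta>\<^sub>0 assume "\<theta>\<^sub>0 \<in> topspace (params_topology I) - {\<theta> \<in> topspace (params_topology I). P \<theta>}"
    then obtain \<delta> where "\<delta> > 0"
      and "\<forall>\<theta>\<in>topspace (params_topology I). (\<forall>k\<in>I. \<bar>\<theta> k - \<theta>\<^sub>0 k\<bar> < \<delta>) \<longrightarrow> \<not> P \<theta>"
      using rejected by blast
    then show "\<exists>T. openin (params_topology I) T \<and> \<theta>\<^sub>0 \<in> T \<and>
        T \<subseteq> topspace (params_topology I) - {\<theta> \<in> topspace (params_topology I). P \<theta>}"
      using \<open>\<theta>\<^sub>0 \<in> _\<close> openin_params_topology_box[OF \<open>finite I\<close>, of \<theta>\<^sub>0 \<delta>]
      by (intro exI[of _ "{\<theta> \<in> topspace (params_topology I). \<forall>k\<in>I. \<bar>\<theta> k - \<theta>\<^sub>0 k\<bar> < \<delta>}"]) auto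
  qed
qed auto

text \<open>The type argument fixes the dimension d over which the sup-norm bound F is imposed.\<close>
definition param_set :: "'d::finite itself \<Rightarrow> real \<Rightarrow> real \<Rightarrow> real \<Rightarrow> real \<Rightarrow> nat list \<Rightarrow>
    (nat \<times> nat \<times> nat \<Rightarrow> real) set" where
  "param_set _ M B F S p =
     {\<theta> \<in> PiE (param_index p) (\<lambda>_. {-B..B}). real (net_nnz p (layers_of p \<theta>)) \<le> S \<and>
        (\<forall>u v t. \<bar>net_psi M p \<theta> (u::real^'d) v t\<bar> \<le> F)}"

lemma param_set_abs_le:
  "\<theta> \<in> param_set T M B F S p \<Longrightarrow> k \<in> param_index p \<Longrightarrow> \<bar>\<theta> k\<bar> \<le> B"
  by (auto simp: param_set_def PiE_iff abs_le_iff)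

lemma closedin_net_nnz_le:
  "closedin (params_topology (param_index p))
     {\<theta> \<in> topspace (params_topology (param_index p)). real (net_nnz p (layers_of p \<theta>)) \<le> S}"
proof (rule closedin_params_topology_by_boxes[OF finite_param_index])
  fix \<theta>\<^sub>0 assume violated: "\<not> real (net_nnz p (layers_of p \<theta>\<^sub>0)) \<le> S"
  define Z where "Z = {k \<in> param_index p. \<theta>\<^sub>0 k \<noteq> 0}"
  define \<delta> where "\<delta> = Min (insert 1 ((\<lambda>k. \<bar>\<theta>\<^sub>0 k\<bar>) ` Z))"
  have "finite Z" using finite_param_index[of p] by (simp add: Z_def)
  then have "\<delta> > 0" and \<delta>_le: "\<And>k. k \<in> Z \<Longrightarrow> \<delta> \<le> \<bar>\<theta>\<^sub>0 k\<bar>"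
    by (auto simp: \<delta>_def Z_def)
  have "\<not> real (net_nnz p (layers_of p \<theta>)) \<le> S" if "\<forall>k\<in>param_index p. \<bar>\<theta> k - \<theta>\<^sub>0 k\<bar> < \<delta>" for \<theta>
  proof -
    have "\<forall>k\<in>param_index p. \<theta>\<^sub>0 k \<noteq> 0 \<longrightarrow> \<theta> k \<noteq> 0"
      using that \<delta>_le by (force simp: Z_def)
    then have "real (net_nnz p (layers_of p \<theta>\<^sub>0)) \<le> real (net_nnz p (layers_of p \<theta>))"
      by (simp add: net_nnz_layers_of_mono)
    then show ?thesis using violated by linarith
  qed
  then show "\<exists>\<delta>>0. \<forall>\<theta>\<in>topspace (params_topology (param_index p)).
      (\<forall>k\<in>param_index p. \<bar>\<theta> k - \<theta>\<^sub>0 k\<bar> < \<delta>) \<longrightarrow> \<not> real (net_nnz p (layers_of p \<theta>)) \<le> S"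
    using \<open>\<delta> > 0\<close> by blast
qed

lemma closedin_net_psi_bounded:
  assumes "2 \<le> length p" "0 \<le> M"
  shows "closedin (params_topology (param_index p))
     {\<theta> \<in> topspace (params_topology (param_index p)).
        \<forall>u v t. \<bar>net_psi M p \<theta> (u::real^'d::finite) v t\<bar> \<le> F}"
proof (rule closedin_params_topology_by_boxes[OF finite_param_index])
  fix \<theta>\<^sub>0 assume "\<not> (\<forall>u v t. \<bar>net_psi M p \<theta>\<^sub>0 (u::real^'d) v t\<bar> \<le> F)"
  then obtain u v :: "real^'d" and t where violated: "F < \<bar>net_psi M p \<theta>\<^sub>0 u v t\<bar>"
    by (auto simp: not_le)
  define B where "B = 1 + (\<Sum>k\<in>param_index p. \<bar>\<theta>\<^sub>0 k\<bar>)"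
  define K where "K = net_perturb_const B (1 + M) p"
  define \<delta> where "\<delta> = min 1 ((\<bar>net_psi M p \<theta>\<^sub>0 u v t\<bar> - F) / (K + 1))"
  have \<theta>\<^sub>0_le: "\<bar>\<theta>\<^sub>0 k\<bar> + 1 \<le> B" if "k \<in> param_index p" for k
    using member_le_sum[OF that, of "\<lambda>k. \<bar>\<theta>\<^sub>0 k\<bar>"] finite_param_index by (simp add: B_def)
  then have \<theta>\<^sub>0_bounded: "\<forall>k\<in>param_index p. \<bar>\<theta>\<^sub>0 k\<bar> \<le> B" by fastforce
  have "0 \<le> B" by (simp add: B_def sum_nonneg)
  then have "0 \<le> K" using assms by (simp add: K_def net_perturb_const_nonneg)
  have "\<delta> > 0" using violated \<open>0 \<le> K\<close> by (simp add: \<delta>_def)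
  have "K * \<delta> \<le> K * ((\<bar>net_psi M p \<theta>\<^sub>0 u v t\<bar> - F) / (K + 1))"
    using \<open>0 \<le> K\<close> by (intro mult_left_mono) (auto simp: \<delta>_def)
  also have "\<dots> < \<bar>net_psi M p \<theta>\<^sub>0 u v t\<bar> - F"
    using \<open>0 \<le> K\<close> violated by (simp add: field_simps)
  finally have K\<delta>: "K * \<delta> < \<bar>net_psi M p \<theta>\<^sub>0 u v t\<bar> - F" .
  have "F < \<bar>net_psi M p \<theta> u v t\<bar>" if close: "\<forall>k\<in>param_index p. \<bar>\<theta> k - \<theta>\<^sub>0 k\<bar> < \<delta>" for \<theta>
  proof -
    have "\<forall>k\<in>param_index p. \<bar>\<theta> k\<bar> \<le> B"
      using close \<theta>\<^sub>0_le by (force simp: \<delta>_def)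
    then have "\<bar>net_psi M p \<theta> u v t - net_psi M p \<theta>\<^sub>0 u v t\<bar> \<le> K * \<delta>"
      unfolding K_def using assms \<open>0 \<le> B\<close> \<open>\<delta> > 0\<close> close \<theta>\<^sub>0_bounded
      by (intro net_psi_lipschitz) (auto intro: less_imp_le)
    then show ?thesis using K\<delta> by linarith
  qed
  then show "\<exists>\<delta>>0. \<forall>\<theta>\<in>topspace (params_topology (param_index p)).
      (\<forall>k\<in>param_index p. \<bar>\<theta> k - \<theta>\<^sub>0 k\<bar> < \<delta>) \<longrightarrow> \<not> (\<forall>u v t. \<bar>net_psi M p \<theta> (u::real^'d) v t\<bar> \<le> F)"
    using \<open>\<delta> > 0\<close> by (meson not_le)
qed

lemma compactin_param_set:
  assumes "2 \<le> length p" "0 \<le> M"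
  shows "compactin (params_topology (param_index p)) (param_set TYPE('d::finite) M B F S p)"
proof -
  have box: "compactin (params_topology (param_index p)) (PiE (param_index p) (\<lambda>_. {-B..B}))"
    by (simp add: compactin_PiE)
  have "param_set TYPE('d) M B F S p = PiE (param_index p) (\<lambda>_. {-B..B}) \<inter>
      {\<theta> \<in> topspace (params_topology (param_index p)). real (net_nnz p (layers_of p \<theta>)) \<le> S} \<inter>
      {\<theta> \<in> topspace (params_topology (param_index p)).
        \<forall>u v t. \<bar>net_psi M p \<theta> (u::real^'d) v t\<bar> \<le> F}"
    by (auto simp: param_set_def PiE_iff extensional_def)
  also have "closedin (params_topology (param_index p)) \<dots>"
    using assms box
    by (intro closedin_Int closedin_net_nnz_le closedin_net_psi_bounded compactin_imp_closedin)
      (auto simp: Hausdorff_space_product_topology)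
  finally have closed: "closedin (params_topology (param_index p)) (param_set TYPE('d) M B F S p)" .
  show ?thesis
    by (rule closed_compactin[OF box _ closed]) (auto simp: param_set_def)
qed

section \<open>The network class as a finite union\<close>

lemma op_dist_Psi_op_net_psi_continuous:
  assumes "2 \<le> length p" "0 \<le> M" "0 \<le> B" and "e > 0"
    and a: "a \<in> param_set TYPE('d::finite) M B F S p"
  shows "\<exists>V. openin (params_topology (param_index p)) V \<and> a \<in> V \<and>
    (\<forall>b\<in>param_set TYPE('d) M B F S p \<inter> V.
       op_dist (Psi_op M (net_psi M p b :: 'd kernel)) (Psi_op M (net_psi M p a)) < ereal e)"
proof -
  define K where "K = net_perturb_const B (1 + M) p"
  define \<delta> where "\<delta> = e / (K + 1)"
  have "0 \<le> K" using assms by (simp add: K_def net_perturb_const_nonneg)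
  then have "\<delta> > 0" and "K * \<delta> < e" using \<open>e > 0\<close> by (simp_all add: \<delta>_def field_simps)
  let ?V = "{\<theta> \<in> topspace (params_topology (param_index p)). \<forall>k\<in>param_index p. \<bar>\<theta> k - a k\<bar> < \<delta>}"
  have "op_dist (Psi_op M (net_psi M p b :: 'd kernel)) (Psi_op M (net_psi M p a))
      < ereal e" if b: "b \<in> param_set TYPE('d) M B F S p \<inter> ?V" for b
  proof -
    have "op_dist (Psi_op M (net_psi M p b :: 'd kernel)) (Psi_op M (net_psi M p a))
        \<le> ereal (K * \<delta>)"
    proof (rule op_dist_Psi_op_le)
      have "integrable (lebesgue_on cubeD) (\<lambda>v. net_psi M p \<theta> u v (x v))"
        if "x \<in> Hsp" "\<theta> \<in> param_set TYPE('d) M B F S p" for u and x :: "real^'d \<Rightarrow> real" and \<theta>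
        using that by (intro integrable_net_psi[where F=F]) (auto simp: Hsp_def param_set_def)
      then show "integrable (lebesgue_on cubeD) (\<lambda>v. net_psi M p b u v (x v))"
        "integrable (lebesgue_on cubeD) (\<lambda>v. net_psi M p a u v (x v))"
        if "x \<in> Hsp" for u and x :: "real^'d \<Rightarrow> real"
        using that a b by auto
      have "\<forall>k\<in>param_index p. \<bar>b k - a k\<bar> \<le> \<delta>" using b by (auto intro: less_imp_le)
      then show "\<bar>net_psi M p b u v t - net_psi M p a (u::real^'d) v t\<bar> \<le> K * \<delta>" for u v t
        unfolding K_def using assms a b \<open>\<delta> > 0\<close> param_set_abs_le
        by (intro net_psi_lipschitz) auto
    qed
    also have "\<dots> < ereal e" using \<open>K * \<delta> < e\<close> by simp
    finally show ?thesis .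
  qed
  moreover have "a \<in> ?V" using a \<open>\<delta> > 0\<close> by (auto simp: param_set_def PiE_iff)
  moreover have "openin (params_topology (param_index p)) ?V"
    by (rule openin_params_topology_box[OF finite_param_index])
  ultimately show ?thesis by (intro exI[of _ ?V]) blast
qed

lemma finite_subcover_Psi_op_param_set:
  assumes "2 \<le> length p" "0 \<le> M" "0 \<le> B"
    and "(\<lambda>\<theta>. Psi_op M (net_psi M p \<theta>)) ` param_set TYPE('d::finite) M B F S p \<subseteq> K"
    and "\<forall>U\<in>\<U>. dopen_in K op_dist U" "K \<subseteq> \<Union>\<U>"
  shows "\<exists>\<V>\<subseteq>\<U>. finite \<V> \<and>
    (\<lambda>\<theta>. Psi_op M (net_psi M p \<theta> :: 'd kernel)) ` param_set TYPE('d) M B F S p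
      \<subseteq> \<Union>\<V>"
  using compactin_param_set[OF assms(1,2)] assms(4)
    op_dist_Psi_op_net_psi_continuous[OF assms(1-3)] assms(5,6)
  by (rule finite_subcover_image)

definition architectures :: "nat \<Rightarrow> nat \<Rightarrow> nat \<Rightarrow> nat list set" where
  "architectures L N n = {p. 2 \<le> length p \<and> length p \<le> L + 2 \<and> p!0 = n \<and> p!(length p - 1) = 1 \<and>
      (\<forall>k\<in>{1..<length p - 1}. p!k \<le> N)}"

lemma finite_architectures: "finite (architectures L N n)"
proof (rule finite_subset[OF _ finite_lists_length_le[of "{..N + n + 1}" "L + 2"]])
  have "set p \<subseteq> {..N + n + 1}" if "p \<in> architectures L N n" for p
  proof -
    have "p!k \<le> N + n + 1" if "k < length p" for k
    proof (cases "k = 0 \<or> k = length p - 1")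
      case False
      then have "k \<in> {1..<length p - 1}" using that by auto
      then have "p!k \<le> N" using \<open>p \<in> _\<close> unfolding architectures_def by blast
      then show ?thesis by simp
    qed (use \<open>p \<in> _\<close> in \<open>auto simp: architectures_def\<close>)
    then show ?thesis by (auto simp: in_set_conv_nth)
  qed
  then show "architectures L N n \<subseteq> {xs. set xs \<subseteq> {..N + n + 1} \<and> length xs \<le> L + 2}"
    by (auto simp: architectures_def)
qed simp

lemma net_psi_in_NetClass:
  assumes p: "p \<in> architectures L N (2 * CARD('d) + 1)"
    and \<theta>: "\<theta> \<in> param_set TYPE('d::finite) M B F S p"
  shows "(net_psi M p \<theta> :: 'd kernel) \<in> NetClass M L N B F S"
  unfolding NetClass_def
proof (intro CollectI exI conjI)
  show "net_wf p (layers_of p \<theta>)" using p by (simp add: net_wf_layers_of architectures_def)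
  show "net_param_bound p (layers_of p \<theta>) B"
    using \<theta> by (intro net_param_bound_layers_of) (auto intro: param_set_abs_le)
qed (use p \<theta> in
    \<open>auto simp: architectures_def net_depth_def net_width_le_def param_set_def net_psi_def\<close>)

lemma NetClass_subset_net_psi_image:
  assumes "0 \<le> B" and \<psi>: "\<psi> \<in> (NetClass M L N B F S :: 'd::finite kernel set)"
  shows "\<exists>p\<in>architectures L N (2 * CARD('d) + 1).
    \<exists>\<theta>\<in>param_set TYPE('d) M B F S p. \<psi> = net_psi M p \<theta>"
proof -
  obtain p ls where wf: "net_wf p ls" and "p ! 0 = 2 * CARD('d) + 1" "p ! length ls = 1"
    and "net_depth ls \<le> L" "net_width_le p ls N"
    and bound: "net_param_bound p ls B" and nnz: "real (net_nnz p ls) \<le> S"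
    and F: "\<forall>u v t. \<bar>if in_dom M u v t then net_fun p ls (u::real^'d) v t else 0\<bar> \<le> F"
    and \<psi>_eq: "\<psi> = (\<lambda>u v t. if in_dom M u v t then net_fun p ls u v t else 0)"
    using \<psi> unfolding NetClass_def by blast
  have len: "length ls = length p - 1" "2 \<le> length p"
    using wf by (auto simp: net_wf_def Suc_le_eq)
  then have arch: "p \<in> architectures L N (2 * CARD('d) + 1)"
    using \<open>p ! 0 = _\<close> \<open>p ! length ls = 1\<close> \<open>net_depth ls \<le> L\<close> \<open>net_width_le p ls N\<close>
    by (auto simp: architectures_def net_depth_def net_width_le_def)
  define \<theta> where "\<theta> = params_of p ls"
  have close: "net_params_close p ls (layers_of p \<theta>) 0"
    using len by (simp add: net_params_close_def \<theta>_def layers_of_params_of)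
  have \<theta>_bound: "\<forall>k\<in>param_index p. \<bar>\<theta> k\<bar> \<le> B"
    using bound len by (auto simp: \<theta>_def params_of_def mem_param_index net_param_bound_def)
  text \<open>Only the entries selected by the architecture enter the network, so re-encoding
    the layers through their parameters does not change the function.\<close>
  have "net_fun p ls u v t = net_fun p (layers_of p \<theta>) (u::real^'d) v t"
    if "in_dom M u v t" for u v t
    using net_fun_perturb[OF wf _ bound _ close \<open>0 \<le> B\<close> order_refl that] len \<theta>_bound
    by (simp add: net_param_bound_layers_of)
  then have "\<psi> = net_psi M p \<theta>"
    unfolding \<psi>_eq net_psi_def by (simp add: fun_eq_iff)
  have "\<theta> \<in> PiE (param_index p) (\<lambda>_. {-B..B})"
    using \<theta>_bound by (auto simp: \<theta>_def params_of_def abs_le_iff)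
  moreover have "\<forall>u v t. \<bar>net_psi M p \<theta> (u::real^'d) v t\<bar> \<le> F"
    using F unfolding \<open>\<psi> = net_psi M p \<theta>\<close>[symmetric] \<psi>_eq by simp
  ultimately have "\<theta> \<in> param_set TYPE('d) M B F S p"
    using nnz len by (simp add: param_set_def \<theta>_def net_nnz_layers_of_params_of)
  then show ?thesis using arch \<open>\<psi> = net_psi M p \<theta>\<close> by blast
qed

lemma NetClass_eq_UN_param_set:
  assumes "0 \<le> B"
  shows "(NetClass M L N B F S :: 'd::finite kernel set)
    = (\<Union>p\<in>architectures L N (2 * CARD('d) + 1). net_psi M p ` param_set TYPE('d) M B F S p)"
proof (intro equalityI subsetI)
  fix \<psi> assume "\<psi> \<in> (NetClass M L N B F S :: 'd kernel set)"
  then obtain p \<theta> where "p \<in> architectures L N (2 * CARD('d) + 1)"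
    and "\<theta> \<in> param_set TYPE('d) M B F S p" and "\<psi> = net_psi M p \<theta>"
    using NetClass_subset_net_psi_image[OF assms] by blast
  then show "\<psi> \<in> (\<Union>p\<in>architectures L N (2 * CARD('d) + 1).
      net_psi M p ` param_set TYPE('d) M B F S p)"
    by blast
qed (auto intro: net_psi_in_NetClass)

theorem lemmaB1:
  fixes M B F S :: real and L N :: nat
  assumes "M > 0" and "B \<ge> 1" and "F \<ge> 1" and "S > 0"
  defines "G \<equiv> (\<lambda>\<psi>. Psi_op M \<psi>) ` (NetClass M L N B F S :: (real^'d::finite \<Rightarrow> real^'d \<Rightarrow> real \<Rightarrow> real) set)"
  shows "(\<forall>\<Psi>\<in>G. \<forall>x\<in>Hsp. esssup_norm x > ereal M \<longrightarrow> \<Psi> x = (\<lambda>u. 0)) \<and> dcompact G op_dist"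
proof
  show "\<forall>\<Psi>\<in>G. \<forall>x\<in>Hsp. esssup_norm x > ereal M \<longrightarrow> \<Psi> x = (\<lambda>u. 0)"
    unfolding G_def by (auto simp: Psi_op_def)
  have "0 \<le> M" "0 \<le> B" using assms by auto
  have G: "G = (\<Union>p\<in>architectures L N (2 * CARD('d) + 1).
      (\<lambda>\<theta>. Psi_op M (net_psi M p \<theta>)) ` param_set TYPE('d) M B F S p)"
    unfolding G_def NetClass_eq_UN_param_set[OF \<open>0 \<le> B\<close>] by (simp add: image_UN image_image)
  show "dcompact G op_dist"
  proof (rule dcompact_finite_UN[OF finite_architectures G])
    fix p \<U> assume "p \<in> architectures L N (2 * CARD('d) + 1)"
      and "\<forall>U\<in>\<U>. dopen_in G op_dist U" "G \<subseteq> \<Union>\<U>"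
    then show "\<exists>\<V>\<subseteq>\<U>. finite \<V> \<and> (\<lambda>\<theta>. Psi_op M (net_psi M p \<theta>)) ` param_set TYPE('d) M B F S p \<subseteq> \<Union>\<V>"
      using \<open>0 \<le> M\<close> \<open>0 \<le> B\<close>
      by (intro finite_subcover_Psi_op_param_set) (auto simp: architectures_def G)
  qed
qed

end
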